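(* Let $P$ be a continuous distribution supported on $[0,1]$ with invertible CDF such that the total variation distance between $\mathrm{Unif}(0,1)$ and $P$ is at most $\epsilon\le\frac1{10}$. Then for all $n,m$ and every preference profile $\sigma$, any alternative $b$ maximizing the Borda score satisfies $\mathbb{E}_P[\mathrm{sw}(b,u)]\ge(1-5\epsilon)\max_{j\in A}\mathbb{E}_P[\mathrm{sw}(j,u)]$.
   Context: There are $n$ voters and $m$ alternatives $A=\{1,\dots,m\}$. A preference profile $\sigma$ consists of a ranking of $A$ for each voter; position $1$ is the top. Given a distribution $P$ and profile $\sigma$, a random utility profile $u$ consistent with $\sigma$ is generated as follows: independently for each voter $i$, draw $m$ i.i.d. samples from $P$ and assign them, from highest to lowest, to the alternatives in the order of voter $i$'s ranking. The social welfare of $j$ is $\mathrm{sw}(j,u)=\sum_i u_{ij}$; $\mathbb{E}_P$ is expectation over $u$. The Borda score of alternative $j$ is $\sum_{i=1}^n(m+1-r^j_i)$, where $r^j_i$ is the position of $j$ in voter $i$'s ranking. *)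

theory Defs
  imports "HOL-Probability.Probability"
begin

definition tv_unif :: "real measure \<Rightarrow> real" where
  "tv_unif P = (SUP A \<in> sets borel. \<bar>measure P A - measure lborel (A \<inter> {0..1})\<bar>)"

(* A preference profile: voter i \<in> {1..n} ranks alternatives {1..m};
   rk i j is the position of alternative j in voter i's ranking (1 = top). *)
definition is_profile :: "nat \<Rightarrow> nat \<Rightarrow> (nat \<Rightarrow> nat \<Rightarrow> nat) \<Rightarrow> bool" where
  "is_profile n m rk \<longleftrightarrow> (\<forall>i\<in>{1..n}. bij_betw (rk i) {1..m} {1..m})"

definition borda :: "nat \<Rightarrow> nat \<Rightarrow> (nat \<Rightarrow> nat \<Rightarrow> nat) \<Rightarrow> nat \<Rightarrow> nat" where
  "borda n m rk j = (\<Sum>i=1..n. m + 1 - rk i j)"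

definition kth_largest :: "real list \<Rightarrow> nat \<Rightarrow> real" where
  "kth_largest xs k = rev (sort xs) ! (k - 1)"

(* Sample space: x (i,l) is the l-th of the m i.i.d. draws for voter i.
   The utility of voter i for alternative j is the (rk i j)-th largest draw of voter i. *)
definition utility :: "nat \<Rightarrow> (nat \<Rightarrow> nat \<Rightarrow> nat) \<Rightarrow> (nat \<times> nat \<Rightarrow> real) \<Rightarrow> nat \<Rightarrow> nat \<Rightarrow> real" where
  "utility m rk x i j = kth_largest (map (\<lambda>l. x (i, l)) [1..<m+1]) (rk i j)"

definition sw :: "nat \<Rightarrow> nat \<Rightarrow> (nat \<Rightarrow> nat \<Rightarrow> nat) \<Rightarrow> (nat \<times> nat \<Rightarrow> real) \<Rightarrow> nat \<Rightarrow> real" where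
  "sw n m rk x j = (\<Sum>i=1..n. utility m rk x i j)"

definition exp_sw :: "real measure \<Rightarrow> nat \<Rightarrow> nat \<Rightarrow> (nat \<Rightarrow> nat \<Rightarrow> nat) \<Rightarrow> nat \<Rightarrow> real" where
  "exp_sw P n m rk j =
     integral\<^sup>L (PiM ({1..n} \<times> {1..m}) (\<lambda>_. P)) (\<lambda>x. sw n m rk x j)"

end

theory Submission
  imports Defs
begin

text \<open>
  The k-th largest of m i.i.d. draws from P exceeds t iff at least k of the draws do, which
  happens with probability \<open>binomial_tail m k (1 - F t)\<close>, F being the CDF of P; integrating
  over t \<in> [0,1] gives the mean of that order statistic. For the uniform distribution, Beta
  integrals show that this mean is (m + 1 - k) / (m + 1), the Borda weight of position k
  divided by m + 1. Since the binomial tail is monotone and |F t - t| \<le> \<epsilon>, the mean under P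
  differs from the uniform one by at most \<epsilon>. So each alternative's expected welfare is within
  n\<epsilon> of its Borda score over m + 1, and the Borda winner loses at most 2n\<epsilon> against the
  optimum. Averaging over the alternatives shows that the optimum is at least
  n (1/2 - \<epsilon>) \<ge> 2n/5, so 2n\<epsilon> is at most a 5\<epsilon> fraction of it.
\<close>

section \<open>Binomial tails\<close>

definition binomial_tail :: "nat \<Rightarrow> nat \<Rightarrow> real \<Rightarrow> real" where
  "binomial_tail m k p = (\<Sum>s\<in>{k..m}. real (m choose s) * p ^ s * (1 - p) ^ (m - s))"

lemma borel_measurable_binomial_tail[measurable]:
  assumes [measurable]: "f \<in> borel_measurable M"
  shows "(\<lambda>x. binomial_tail m k (f x)) \<in> borel_measurable M"
  unfolding binomial_tail_def by measurable

lemma binomial_tail_nonneg: "0 \<le> p \<Longrightarrow> p \<le> 1 \<Longrightarrow> 0 \<le> binomial_tail m k p"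
  unfolding binomial_tail_def by (intro sum_nonneg mult_nonneg_nonneg) auto

lemma binomial_tail_one:
  assumes "k \<le> m"
  shows "binomial_tail m k 1 = 1"
proof -
  have "binomial_tail m k 1 = (\<Sum>s\<in>{k..m}. if s = m then 1 else 0)"
    unfolding binomial_tail_def by (intro sum.cong refl) auto
  then show ?thesis
    using assms by simp
qed

lemma sum_power_card_subsets:
  fixes p q :: real
  assumes "finite L"
  shows "(\<Sum>S | S \<subseteq> L \<and> k \<le> card S. p ^ card S * q ^ (card L - card S))
       = (\<Sum>s\<in>{k..card L}. real (card L choose s) * p ^ s * q ^ (card L - s))"
proof -
  have split: "{S. S \<subseteq> L \<and> k \<le> card S} = (\<Union>s\<in>{k..card L}. {S. S \<subseteq> L \<and> card S = s})"
    using assms by (auto intro: card_mono)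
  have "(\<Sum>S | S \<subseteq> L \<and> k \<le> card S. p ^ card S * q ^ (card L - card S))
      = (\<Sum>s\<in>{k..card L}. \<Sum>S | S \<subseteq> L \<and> card S = s. p ^ card S * q ^ (card L - card S))"
    unfolding split by (rule sum.UNION_disjoint) (use assms in auto)
  also have "\<dots> = (\<Sum>s\<in>{k..card L}. real (card L choose s) * p ^ s * q ^ (card L - s))"
    using assms by (intro sum.cong refl) (simp add: n_subsets)
  finally show ?thesis .
qed

lemma (in real_distribution) measure_PiM_count_exceeding:
  fixes t :: real and k :: nat
  assumes I: "finite I" "L \<subseteq> I"
  defines "E \<equiv> {x \<in> space (PiM I (\<lambda>_. M)). k \<le> card {l\<in>L. t < x l}}"
  shows "E \<in> sets (PiM I (\<lambda>_. M))"
    and "measure (PiM I (\<lambda>_. M)) E = binomial_tail (card L) k (prob {t<..})"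
proof -
  interpret Pi: finite_product_prob_space "\<lambda>_. M" I
    using I by unfold_locales (auto intro: prob_space_axioms)
  define A where
    "A S l = (if l \<in> L then if l \<in> S then {t<..} else {..t} else UNIV)" for S l
  have sets_A: "PiE I (A S) \<in> sets (PiM I (\<lambda>_. M))" for S
    using I by (intro sets_PiM_I_finite) (auto simp: A_def)
  have A_iff: "x \<in> PiE I (A S) \<longleftrightarrow> x \<in> space (PiM I (\<lambda>_. M)) \<and> {l\<in>L. t < x l} = S"
    if "S \<subseteq> L" for x S
    using that I by (auto simp: A_def PiE_iff space_PiM not_less split: if_splits)
  have "finite L"
    using I finite_subset by blast
  define SS where "SS = {S. S \<subseteq> L \<and> k \<le> card S}"
  have finite_SS: "finite SS"
    using \<open>finite L\<close> by (auto simp: SS_def intro: finite_subset[of _ "Pow L"])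
  have E_eq: "E = (\<Union>S\<in>SS. PiE I (A S))"
    using I by (auto simp: E_def SS_def A_iff)
  show "E \<in> sets (PiM I (\<lambda>_. M))"
    unfolding E_eq using finite_SS I by (intro sets.finite_UN sets_A)
  have prob_A: "Pi.prob (PiE I (A S)) = prob {t<..} ^ card S * (1 - prob {t<..}) ^ (card L - card S)"
    if "S \<subseteq> L" for S
  proof -
    have "Pi.prob (PiE I (A S)) = (\<Prod>l\<in>I. prob (A S l))"
      by (rule Pi.prob_times) (simp add: A_def)
    also have "\<dots> = (\<Prod>l\<in>L. if l \<in> S then prob {t<..} else prob {..t})"
      using I by (intro prod.mono_neutral_cong_right) (auto simp: A_def prob_space[simplified])
    also have "\<dots> = prob {t<..} ^ card S * (1 - prob {t<..}) ^ (card L - card S)"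
    proof -
      have "prob {..t} = 1 - prob {t<..}"
        using prob_compl[of "{t<..}"] by (simp flip: Compl_eq_Diff_UNIV)
      then show ?thesis
        using that \<open>finite L\<close>
        by (simp add: prod.If_cases Int_absorb1 card_Diff_subset finite_subset Diff_eq[symmetric])
    qed
    finally show ?thesis .
  qed
  have "measure (PiM I (\<lambda>_. M)) E = (\<Sum>S\<in>SS. Pi.prob (PiE I (A S)))"
    unfolding E_eq using finite_SS
    by (intro Pi.finite_measure_finite_Union) (auto simp: disjoint_family_on_def SS_def A_iff sets_A)
  also have "\<dots> = binomial_tail (card L) k (prob {t<..})"
    unfolding binomial_tail_def sum_power_card_subsets[OF \<open>finite L\<close>, symmetric] SS_def
    by (intro sum.cong refl) (simp add: prob_A)
  finally show "measure (PiM I (\<lambda>_. M)) E = binomial_tail (card L) k (prob {t<..})" .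
qed

lemma binomial_tail_mono:
  assumes "0 \<le> p" "p \<le> q" "q \<le> 1"
  shows "binomial_tail m k p \<le> binomial_tail m k q"
proof -
  \<comment> \<open>Coupling: \<open>binomial_tail m k r\<close> is the probability that at least k of m independent
    uniform variables on [0,1] exceed 1 - r.\<close>
  define U where "U = uniform_measure lborel {0..1::real}"
  interpret U: real_distribution U
    unfolding U_def real_distribution_def real_distribution_axioms_def
    by (auto intro!: prob_space_uniform_measure)
  interpret Pi: finite_product_prob_space "\<lambda>_. U" "{1..m}"
    by unfold_locales (auto intro: U.prob_space_axioms)
  have prob_U: "U.prob {1 - r<..} = r" if "0 \<le> r" "r \<le> 1" for r
  proof -
    have "{0..1} \<inter> {1 - r<..} = {1 - r<..1::real}"
      using that by auto
    then show ?thesis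
      using that by (simp add: U_def)
  qed
  define E where "E r = {x \<in> space (PiM {1..m} (\<lambda>_. U)). k \<le> card {l\<in>{1..m}. 1 - r < x l}}"
    for r
  have "binomial_tail m k p = Pi.prob (E p)"
    using U.measure_PiM_count_exceeding(2)[of "{1..m}" "{1..m}" k "1 - p"] prob_U assms
    by (simp add: E_def)
  also have "\<dots> \<le> Pi.prob (E q)"
  proof (rule Pi.finite_measure_mono)
    show "E p \<subseteq> E q"
      using assms unfolding E_def by (auto elim!: order_trans intro!: card_mono)
    show "E q \<in> Pi.events"
      unfolding E_def by (rule U.measure_PiM_count_exceeding(1)) auto
  qed
  also have "\<dots> = binomial_tail m k q"
    using U.measure_PiM_count_exceeding(2)[of "{1..m}" "{1..m}" k "1 - q"] prob_U assms
    by (simp add: E_def)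
  finally show ?thesis .
qed

lemma binomial_tail_le_one:
  assumes "0 \<le> p" "p \<le> 1" "k \<le> m"
  shows "binomial_tail m k p \<le> 1"
  using binomial_tail_mono[of p 1 m k] binomial_tail_one[OF assms(3)] assms by simp

section \<open>Order statistics of i.i.d. samples\<close>

lemma kth_largest_gt_iff:
  fixes xs :: "real list"
  assumes k: "1 \<le> k" "k \<le> length xs"
  shows "t < kth_largest xs k \<longleftrightarrow> k \<le> length (filter ((<) t) xs)"
proof -
  define ys where "ys = sort xs"
  define L where "L = length xs"
  have len_ys: "length ys = L" and sorted_ys: "sorted ys"
    by (simp_all add: ys_def L_def)
  have kth: "kth_largest xs k = ys ! (L - k)"
    using k by (simp add: kth_largest_def ys_def L_def rev_nth)
  have "length (filter ((<) t) xs) = length (filter ((<) t) ys)"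
    by (metis ys_def mset_filter mset_sort size_mset)
  also have "\<dots> = card {j. j < L \<and> t < ys ! j}"
    by (simp add: length_filter_conv_card len_ys)
  finally have count: "length (filter ((<) t) xs) = card {j. j < L \<and> t < ys ! j}" .
  show ?thesis
  proof
    assume "t < kth_largest xs k"
    then have "{L - k..<L} \<subseteq> {j. j < L \<and> t < ys ! j}"
      using kth sorted_ys len_ys by (auto elim!: less_le_trans intro!: sorted_nth_mono)
    then have "card {L - k..<L} \<le> card {j. j < L \<and> t < ys ! j}"
      by (intro card_mono) auto
    then show "k \<le> length (filter ((<) t) xs)"
      using count k by (simp add: L_def)
  next
    assume "k \<le> length (filter ((<) t) xs)"
    show "t < kth_largest xs k"
    proof (rule ccontr)
      assume "\<not> t < kth_largest xs k"
      have "{j. j < L \<and> t < ys ! j} \<subseteq> {L - k + 1..<L}"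
      proof clarify
        fix j assume j: "j < L" "t < ys ! j"
        have "\<not> j \<le> L - k"
        proof
          assume "j \<le> L - k"
          then have "ys ! j \<le> ys ! (L - k)"
            using sorted_ys len_ys k by (intro sorted_nth_mono) (auto simp: L_def)
          then show False
            using j \<open>\<not> t < kth_largest xs k\<close> kth by simp
        qed
        then show "j \<in> {L - k + 1..<L}"
          using j by simp
      qed
      then have "card {j. j < L \<and> t < ys ! j} \<le> card {L - k + 1..<L}"
        by (intro card_mono) auto
      then show False
        using \<open>k \<le> length (filter ((<) t) xs)\<close> count k by (simp add: L_def)
    qed
  qed
qed

lemma utility_gt_iff:
  assumes "rk i j \<in> {1..m}"
  shows "t < utility m rk x i j \<longleftrightarrow> rk i j \<le> card {\<iota> \<in> {i} \<times> {1..m}. t < x \<iota>}"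
proof -
  have "length (filter ((<) t) (map (\<lambda>l. x (i, l)) [1..<m+1]))
      = card ({l. t < x (i, l)} \<inter> {1..m})"
  proof -
    have "set [1..<m+1] = {1..m}"
      by auto
    then show ?thesis
      by (simp add: filter_map comp_def distinct_length_filter del: upt_Suc)
  qed
  also have "\<dots> = card (Pair i ` ({l. t < x (i, l)} \<inter> {1..m}))"
    by (simp add: card_image inj_on_def)
  also have "Pair i ` ({l. t < x (i, l)} \<inter> {1..m}) = {\<iota> \<in> {i} \<times> {1..m}. t < x \<iota>}"
    by auto
  finally show ?thesis
    using assms kth_largest_gt_iff[of "rk i j" "map (\<lambda>l. x (i, l)) [1..<m+1]" t]
    unfolding utility_def by (simp del: upt_Suc)
qed

lemma utility_mem_coordinates:
  assumes "rk i j \<in> {1..m}"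
  shows "utility m rk x i j \<in> x ` ({i} \<times> {1..m})"
proof -
  have "utility m rk x i j \<in> set (rev (sort (map (\<lambda>l. x (i, l)) [1..<m+1])))"
    using assms unfolding utility_def kth_largest_def by (intro nth_mem) auto
  then show ?thesis
    by auto
qed

lemma integrable_indicator_Icc_mult:
  fixes f :: "real \<Rightarrow> real"
  assumes [measurable]: "f \<in> borel_measurable borel" and "\<And>t. t \<in> {a..b} \<Longrightarrow> \<bar>f t\<bar> \<le> B"
  shows "integrable lborel (\<lambda>t. indicator {a..b} t * f t)"
proof (rule integrableI_bounded_set[where A="{a..b}" and B=B])
  show "AE x in lborel. x \<in> {a..b} \<longrightarrow> norm (indicator {a..b} x * f x) \<le> B"
    using assms(2) by auto
qed (auto simp: emeasure_lborel_Icc_eq)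

lemma (in prob_space) expectation_eq_integral_prob_greater:
  assumes [measurable]: "v \<in> borel_measurable M" and range: "AE x in M. v x \<in> {0..1}"
  shows "expectation v = (LINT t|lborel. indicator {0..1} t * prob {x \<in> space M. t < v x})"
proof -
  interpret pair_sigma_finite M lborel
    by (simp add: pair_sigma_finite_def prob_space_imp_sigma_finite prob_space_axioms
        lborel.sigma_finite_measure_axioms)
  define g where "g t = prob {x \<in> space M. t < v x}" for t
  have "mono (\<lambda>t. - g t)"
    unfolding mono_def g_def by (auto intro!: finite_measure_mono)
  then have "(\<lambda>t. - (- g t)) \<in> borel_measurable borel"
    by (intro borel_measurable_uminus borel_measurable_mono)
  then have [measurable]: "g \<in> borel_measurable borel"
    by simp
  have g_range: "0 \<le> g t" "g t \<le> 1" for t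
    by (simp_all add: g_def)
  have "(\<integral>\<^sup>+x. ennreal (v x) \<partial>M)
      = (\<integral>\<^sup>+x. (\<integral>\<^sup>+t. ennreal (indicator {0..1} t * indicator {x \<in> space M. t < v x} x) \<partial>lborel) \<partial>M)"
  proof (rule nn_integral_cong_AE)
    show "AE x in M. ennreal (v x)
        = (\<integral>\<^sup>+t. ennreal (indicator {0..1} t * indicator {x \<in> space M. t < v x} x) \<partial>lborel)"
      using range AE_space
    proof eventually_elim
      case (elim x)
      then have "(\<lambda>t. ennreal (indicator {0..1} t * indicator {x \<in> space M. t < v x} x))
          = indicator {0..<v x}"
        by (auto simp: indicator_def fun_eq_iff)
      then show ?case
        using elim by simp
    qed
  qed
  also have "\<dots> = (\<integral>\<^sup>+t. (\<integral>\<^sup>+x. ennreal (indicator {0..1} t * indicator {x \<in> space M. t < v x} x) \<partial>M) \<partial>lborel)"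
    by (rule Fubini'[symmetric]) measurable
  also have "\<dots> = (\<integral>\<^sup>+t. ennreal (indicator {0..1} t * g t) \<partial>lborel)"
    by (intro nn_integral_cong)
      (simp add: ennreal_mult ennreal_indicator nn_integral_cmult_indicator emeasure_eq_measure g_def)
  also have "\<dots> = ennreal (LINT t|lborel. indicator {0..1} t * g t)"
    using g_range by (intro nn_integral_eq_integral integrable_indicator_Icc_mult[where B=1]) auto
  finally have "(\<integral>\<^sup>+x. ennreal (v x) \<partial>M) = ennreal (LINT t|lborel. indicator {0..1} t * g t)" .
  moreover have "expectation v = enn2real (\<integral>\<^sup>+x. ennreal (v x) \<partial>M)"
    using range by (intro integral_eq_nn_integral) auto
  ultimately show ?thesis
    using g_range by (simp add: g_def integral_nonneg)
qed

lemma (in real_distribution) prob_greaterThan: "prob {t<..} = 1 - cdf M t"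
  using prob_compl[of "{..t}"] by (simp add: cdf_def2 flip: Compl_eq_Diff_UNIV)

context real_distribution
begin

context
  fixes I :: "(nat \<times> nat) set" and m i j :: nat and rk :: "nat \<Rightarrow> nat \<Rightarrow> nat"
  assumes I: "finite I" "{i} \<times> {1..m} \<subseteq> I" and rank: "rk i j \<in> {1..m}"
begin

lemma utility_gt_set_eq:
  "{x \<in> space (PiM I (\<lambda>_. M)). t < utility m rk x i j}
    = {x \<in> space (PiM I (\<lambda>_. M)). rk i j \<le> card {\<iota> \<in> {i} \<times> {1..m}. t < x \<iota>}}"
  using utility_gt_iff[where rk=rk, OF rank] by auto

lemma borel_measurable_utility:
  "(\<lambda>x. utility m rk x i j) \<in> borel_measurable (PiM I (\<lambda>_. M))"
  unfolding borel_measurable_iff_greater utility_gt_set_eq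
  using I by (intro allI measure_PiM_count_exceeding(1))

context
  assumes unit_support: "prob {0..1} = 1"
begin

lemma AE_utility_unit_interval:
  "AE x in PiM I (\<lambda>_. M). utility m rk x i j \<in> {0..1}"
proof -
  have "AE x in PiM I (\<lambda>_. M). \<forall>\<iota>\<in>{i} \<times> {1..m}. x \<iota> \<in> {0..1}"
    using I AE_prob_1[OF unit_support]
    by (intro AE_finite_allI AE_PiM_component prob_space_axioms) auto
  then show ?thesis
  proof eventually_elim
    case (elim x)
    then show ?case
      using utility_mem_coordinates[where rk=rk and x=x, OF rank] by auto
  qed
qed

lemma integrable_utility: "integrable (PiM I (\<lambda>_. M)) (\<lambda>x. utility m rk x i j)"
proof -
  interpret Pi: prob_space "PiM I (\<lambda>_. M)"
    by (intro prob_space_PiM prob_space_axioms)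
  have "AE x in PiM I (\<lambda>_. M). norm (utility m rk x i j) \<le> 1"
    using AE_utility_unit_interval by eventually_elim auto
  then show ?thesis
    using borel_measurable_utility by (intro Pi.integrable_const_bound[where B=1])
qed

lemma integral_utility:
  "integral\<^sup>L (PiM I (\<lambda>_. M)) (\<lambda>x. utility m rk x i j)
    = (LINT t|lborel. indicator {0..1} t * binomial_tail m (rk i j) (1 - cdf M t))"
proof -
  interpret Pi: prob_space "PiM I (\<lambda>_. M)"
    by (intro prob_space_PiM prob_space_axioms)
  have "card ({i} \<times> {1..m}) = m"
    by (simp add: card_cartesian_product)
  then have prob_gt: "Pi.prob {x \<in> space (PiM I (\<lambda>_. M)). t < utility m rk x i j}
      = binomial_tail m (rk i j) (1 - cdf M t)" for t
    using I by (simp add: utility_gt_set_eq measure_PiM_count_exceeding(2) prob_greaterThan)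
  show ?thesis
    unfolding Pi.expectation_eq_integral_prob_greater[OF borel_measurable_utility
        AE_utility_unit_interval] prob_gt ..
qed

end

end

end

section \<open>Comparison with the uniform distribution\<close>

lemma binomial_mult_Beta:
  assumes "s \<le> m"
  shows "real (m choose s) * Beta (real (m - s) + 1) (real s + 1) = 1 / (real m + 1)"
proof -
  have "real m + 1 \<notin> \<int>\<^sub>\<le>\<^sub>0"
    using nonpos_Ints_nonpos by fastforce
  then have "real (m choose s) = inverse ((real m + 1) * Beta (real (m - s) + 1) (real s + 1))"
    using gbinomial_Beta[of "real m" s] assms by (simp add: binomial_gbinomial)
  moreover have "real (m choose s) \<noteq> 0"
    using assms by simp
  ultimately show ?thesis
    by (simp add: field_simps)
qed

lemma integral_binomial_tail_uniform:
  assumes "k \<le> m"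
  shows "(LINT t|lborel. indicator {0..1} t * binomial_tail m k (1 - t))
    = (real m + 1 - real k) / (real m + 1)"
proof -
  have term_integral: "((\<lambda>t. real (m choose s) * (1 - t) ^ s * (1 - (1 - t)) ^ (m - s))
      has_integral 1 / (real m + 1)) {0..1}" if "s \<in> {k..m}" for s
  proof -
    have "((\<lambda>t. t powr (real (m - s) + 1 - 1) * (1 - t) powr (real s + 1 - 1))
        has_integral Beta (real (m - s) + 1) (real s + 1)) {0<..<1}"
      using has_integral_Beta_real[of "real (m - s) + 1" "real s + 1"]
      by (simp flip: has_integral_Icc_iff_Ioo)
    then have "((\<lambda>t. (1 - t) ^ s * t ^ (m - s)) has_integral Beta (real (m - s) + 1) (real s + 1))
        {0<..<1}"
      by (rule has_integral_cong[THEN iffD1, rotated]) (auto simp: powr_realpow)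
    then have "((\<lambda>t. real (m choose s) * ((1 - t) ^ s * t ^ (m - s)))
        has_integral real (m choose s) * Beta (real (m - s) + 1) (real s + 1)) {0<..<1}"
      by (rule has_integral_mult_right)
    then show ?thesis
      using binomial_mult_Beta[of s m] that by (simp add: has_integral_Icc_iff_Ioo mult.assoc)
  qed
  have "((\<lambda>t. binomial_tail m k (1 - t)) has_integral (\<Sum>s\<in>{k..m}. 1 / (real m + 1))) {0..1}"
    unfolding binomial_tail_def by (intro has_integral_sum term_integral) auto
  then have "integral {0..1} (\<lambda>t. binomial_tail m k (1 - t)) = (real m + 1 - real k) / (real m + 1)"
    using assms by (simp add: integral_unique)
  moreover have "set_integrable lborel {0..1} (\<lambda>t. binomial_tail m k (1 - t))"
    unfolding set_integrable_def binomial_tail_def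
    by (intro borel_integrable_compact compact_Icc continuous_intros)
  ultimately show ?thesis
    using set_borel_integral_eq_integral(2) by (fastforce simp: set_lebesgue_integral_def)
qed

lemma integral_indicator_Icc_shift:
  fixes f :: "real \<Rightarrow> real"
  shows "(LINT t|lborel. indicator {a..b} t * f (t - c))
    = (LINT t|lborel. indicator {a - c..b - c} t * f t)"
proof -
  have "(LINT t|lborel. indicator {a..b} t * f (t - c))
      = \<bar>1\<bar> *\<^sub>R (LINT s|lborel. indicator {a..b} (c + 1 * s) * f (c + 1 * s - c))"
    by (rule lborel_integral_real_affine) simp
  also have "(\<lambda>s. indicator {a..b} (c + 1 * s) * f (c + 1 * s - c))
      = (\<lambda>s. indicator {a - c..b - c} s * f s :: real)"
    by (auto simp: indicator_def fun_eq_iff)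
  finally show ?thesis
    by simp
qed

text \<open>
  Since t - \<epsilon> \<le> F t \<le> t + \<epsilon>, the integrand \<open>g (F t)\<close> is squeezed between \<open>g\<close> shifted by
  \<open>\<plusminus>\<epsilon>\<close>; shifting costs at most the mass \<epsilon> near an end of [0,1].
\<close>

context
  fixes g F :: "real \<Rightarrow> real" and \<epsilon> :: real
  assumes measurable_g [measurable]: "g \<in> borel_measurable borel"
    and measurable_F [measurable]: "F \<in> borel_measurable borel"
    and antimono_g: "\<And>p q. 0 \<le> p \<Longrightarrow> p \<le> q \<Longrightarrow> q \<le> 1 \<Longrightarrow> g q \<le> g p"
    and range_g: "\<And>p. p \<in> {0..1} \<Longrightarrow> g p \<in> {0..1}"
    and range_F: "\<And>t. t \<in> {0..1} \<Longrightarrow> F t \<in> {0..1}"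
    and F_close: "\<And>t. t \<in> {0..1} \<Longrightarrow> \<bar>F t - t\<bar> \<le> \<epsilon>"
    and small: "\<epsilon> \<le> 1"
begin

private lemma epsilon_nonneg: "0 \<le> \<epsilon>"
  using F_close[of 0] range_F[of 0] by simp

private lemma integrable_Icc_comp:
  fixes h :: "real \<Rightarrow> real"
  assumes [measurable]: "h \<in> borel_measurable borel" and "\<And>t. t \<in> {a..b} \<Longrightarrow> h t \<in> {0..1}"
  shows "integrable lborel (\<lambda>t. indicator {a..b} t * g (h t))"
  by (rule integrable_indicator_Icc_mult[where B=1]) (use assms range_g in auto)

private lemma integral_antimono_comp_le:
  "(LINT t|lborel. indicator {0..1} t * g (F t)) \<le> (LINT t|lborel. indicator {0..1} t * g t) + \<epsilon>"
proof -
  have "(LINT t|lborel. indicator {0..1} t * g (F t))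
      \<le> (LINT t|lborel. indicator {0..\<epsilon>} t + indicator {\<epsilon>..1} t * g (t - \<epsilon>))"
  proof (intro integral_mono Bochner_Integration.integrable_add integrable_Icc_comp
      integrable_real_indicator)
    fix t :: real
    have "g (F t) \<le> g (t - \<epsilon>)" if "t \<in> {\<epsilon>..1}"
      using that epsilon_nonneg F_close[of t] range_F[of t] by (auto intro!: antimono_g)
    then show "indicator {0..1} t * g (F t) \<le> indicator {0..\<epsilon>} t + indicator {\<epsilon>..1} t * g (t - \<epsilon>)"
      using epsilon_nonneg small range_F[of t] range_g[of "F t"] range_g[of "t - \<epsilon>"]
      by (auto simp: indicator_def)
  qed (use range_F epsilon_nonneg in \<open>auto simp: emeasure_lborel_Icc_eq\<close>)
  also have "\<dots> = \<epsilon> + (LINT t|lborel. indicator {0..1 - \<epsilon>} t * g t)"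
    using epsilon_nonneg small integral_indicator_Icc_shift[of \<epsilon> 1 g \<epsilon>]
    by (subst Bochner_Integration.integral_add)
      (auto intro!: integrable_Icc_comp simp: emeasure_lborel_Icc_eq)
  also have "(LINT t|lborel. indicator {0..1 - \<epsilon>} t * g t) \<le> (LINT t|lborel. indicator {0..1} t * g t)"
    using epsilon_nonneg range_g
    by (intro integral_mono integrable_Icc_comp[where h="\<lambda>t. t", simplified]) (auto simp: indicator_def)
  finally show ?thesis
    by simp
qed

private lemma integral_antimono_comp_ge:
  "(LINT t|lborel. indicator {0..1} t * g t) \<le> (LINT t|lborel. indicator {0..1} t * g (F t)) + \<epsilon>"
proof -
  have "(LINT t|lborel. indicator {0..1} t * g t)
      \<le> (LINT t|lborel. indicator {0..\<epsilon>} t + indicator {\<epsilon>..1} t * g t)"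
  proof (intro integral_mono Bochner_Integration.integrable_add
      integrable_Icc_comp[where h="\<lambda>t. t", simplified] integrable_real_indicator)
    fix t :: real
    show "indicator {0..1} t * g t \<le> indicator {0..\<epsilon>} t + indicator {\<epsilon>..1} t * g t"
      using epsilon_nonneg small range_g[of t] by (auto simp: indicator_def)
  qed (use epsilon_nonneg in \<open>auto simp: emeasure_lborel_Icc_eq\<close>)
  also have "\<dots> = \<epsilon> + (LINT t|lborel. indicator {0..1 - \<epsilon>} t * g (t + \<epsilon>))"
    using epsilon_nonneg small integral_indicator_Icc_shift[of 0 "1 - \<epsilon>" g "- \<epsilon>"]
    by (subst Bochner_Integration.integral_add)
      (auto intro!: integrable_Icc_comp simp: emeasure_lborel_Icc_eq)
  also have "(LINT t|lborel. indicator {0..1 - \<epsilon>} t * g (t + \<epsilon>))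
      \<le> (LINT t|lborel. indicator {0..1} t * g (F t))"
  proof (intro integral_mono integrable_Icc_comp)
    fix t :: real
    have "g (t + \<epsilon>) \<le> g (F t)" if "t \<in> {0..1 - \<epsilon>}"
      using that epsilon_nonneg F_close[of t] range_F[of t] by (auto intro!: antimono_g)
    then show "indicator {0..1 - \<epsilon>} t * g (t + \<epsilon>) \<le> indicator {0..1} t * g (F t)"
      using epsilon_nonneg range_F[of t] range_g[of "F t"] by (auto simp: indicator_def)
  qed (use epsilon_nonneg range_F in auto)
  finally show ?thesis
    by simp
qed

lemma integral_antimono_comp_approx:
  "\<bar>(LINT t|lborel. indicator {0..1} t * g (F t)) - (LINT t|lborel. indicator {0..1} t * g t)\<bar> \<le> \<epsilon>"
  using integral_antimono_comp_le integral_antimono_comp_ge by linarith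

end

context real_distribution
begin

lemma abs_prob_minus_uniform_le_tv_unif:
  assumes "A \<in> sets borel"
  shows "\<bar>prob A - measure lborel (A \<inter> {0..1})\<bar> \<le> tv_unif M"
proof -
  have "\<bar>prob B - measure lborel (B \<inter> {0..1})\<bar> \<le> 2" if "B \<in> sets borel" for B :: "real set"
  proof -
    have "measure lborel (B \<inter> {0..1}) \<le> measure lborel {0..1::real}"
      using that by (intro measure_mono_fmeasurable) (auto simp: fmeasurable_def)
    then have "measure lborel (B \<inter> {0..1}) \<le> 1"
      by simp
    then show ?thesis
      using prob_le_1[of B] measure_nonneg[of M B] measure_nonneg[of lborel "B \<inter> {0..1}"]
      unfolding abs_le_iff by linarith
  qed
  then have "bdd_above ((\<lambda>A. \<bar>prob A - measure lborel (A \<inter> {0..1})\<bar>) ` sets borel)"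
    by (intro bdd_aboveI[where M=2]) blast
  then show ?thesis
    unfolding tv_unif_def using assms by (rule cSUP_upper2) simp
qed

lemma abs_cdf_minus_le_tv_unif:
  assumes "t \<in> {0..1}"
  shows "\<bar>cdf M t - t\<bar> \<le> tv_unif M"
proof -
  have "{..t} \<inter> {0..1} = {0..t}"
    using assms by auto
  then show ?thesis
    using abs_prob_minus_uniform_le_tv_unif[of "{..t}"] assms by (simp add: cdf_def2)
qed

lemma integral_binomial_tail_cdf_approx:
  assumes "\<And>t. t \<in> {0..1} \<Longrightarrow> \<bar>cdf M t - t\<bar> \<le> \<epsilon>" "\<epsilon> \<le> 1" "k \<le> m"
  shows "\<bar>(LINT t|lborel. indicator {0..1} t * binomial_tail m k (1 - cdf M t))
    - (real m + 1 - real k) / (real m + 1)\<bar> \<le> \<epsilon>"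
proof -
  have "cdf M \<in> borel_measurable borel"
    by (intro borel_measurable_mono monoI cdf_nondecreasing)
  then show ?thesis
    using integral_antimono_comp_approx[of "\<lambda>p. binomial_tail m k (1 - p)" "cdf M" \<epsilon>]
      integral_binomial_tail_uniform[OF assms(3)] assms
    by (simp add: binomial_tail_mono binomial_tail_nonneg binomial_tail_le_one cdf_nonneg
        cdf_bounded_prob)
qed

end

section \<open>Borda scores and expected welfare\<close>

lemma is_profile_rank_mem:
  assumes "is_profile n m rk" "i \<in> {1..n}" "j \<in> {1..m}"
  shows "rk i j \<in> {1..m}"
  using assms unfolding is_profile_def by (blast dest: bij_betw_apply)

lemma (in real_distribution) exp_sw_eq_sum_integral:
  assumes "prob {0..1} = 1" "is_profile n m rk" "j \<in> {1..m}"
  shows "exp_sw M n m rk j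
    = (\<Sum>i=1..n. LINT t|lborel. indicator {0..1} t * binomial_tail m (rk i j) (1 - cdf M t))"
proof -
  have rank: "rk i j \<in> {1..m}" if "i \<in> {1..n}" for i
    using is_profile_rank_mem[OF assms(2) that assms(3)] .
  have rows: "{i} \<times> {1..m} \<subseteq> {1..n} \<times> {1..m}" if "i \<in> {1..n}" for i
    using that by auto
  show ?thesis
    unfolding exp_sw_def sw_def
    using assms(1) rank rows
    by (simp add: Bochner_Integration.integral_sum integrable_utility integral_utility)
qed

context
  fixes n m :: nat and rk :: "nat \<Rightarrow> nat \<Rightarrow> nat"
  assumes profile: "is_profile n m rk"
begin

lemma sum_rank_reindex:
  assumes "i \<in> {1..n}"
  shows "(\<Sum>j\<in>{1..m}. f (rk i j)) = (\<Sum>k\<in>{1..m}. f k)"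
  using profile assms unfolding is_profile_def by (intro sum.reindex_bij_betw) blast

lemma borda_eq_sum:
  assumes "j \<in> {1..m}"
  shows "real (borda n m rk j) = (\<Sum>i=1..n. real m + 1 - real (rk i j))"
  unfolding borda_def of_nat_sum
proof (intro sum.cong refl)
  fix i assume "i \<in> {1..n}"
  then have "rk i j \<le> m + 1"
    using is_profile_rank_mem[OF profile _ assms] by fastforce
  then show "real (m + 1 - rk i j) = real m + 1 - real (rk i j)"
    by simp
qed

context
  fixes G :: "nat \<Rightarrow> real" and \<epsilon> :: real
  assumes G_approx: "\<And>k. k \<in> {1..m} \<Longrightarrow> \<bar>G k - (real m + 1 - real k) / (real m + 1)\<bar> \<le> \<epsilon>"
begin

lemma positional_welfare_approx_borda:
  assumes "j \<in> {1..m}"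
  shows "\<bar>(\<Sum>i=1..n. G (rk i j)) - real (borda n m rk j) / (real m + 1)\<bar> \<le> real n * \<epsilon>"
proof -
  have "\<bar>(\<Sum>i=1..n. G (rk i j)) - real (borda n m rk j) / (real m + 1)\<bar>
      = \<bar>\<Sum>i=1..n. G (rk i j) - (real m + 1 - real (rk i j)) / (real m + 1)\<bar>"
    unfolding borda_eq_sum[OF assms] sum_divide_distrib by (simp only: sum_subtractf)
  also have "\<dots> \<le> (\<Sum>i=1..n. \<epsilon>)"
    using is_profile_rank_mem[OF profile _ assms]
    by (intro order_trans[OF sum_abs] sum_mono G_approx)
  finally show ?thesis
    by simp
qed

lemma sum_positional_welfare_ge:
  "real n * real m * (1/2 - \<epsilon>) \<le> (\<Sum>j\<in>{1..m}. \<Sum>i=1..n. G (rk i j))"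
proof -
  have "(\<Sum>k\<in>{1..m}. (real m + 1 - real k) / (real m + 1)) = real m / 2"
  proof -
    have "(\<Sum>k\<in>{1..m}. real k) = real m * (real m + 1) / 2"
      by (induction m) (auto simp: field_simps)
    then have "(\<Sum>k\<in>{1..m}. real m + 1 - real k) = real m * (real m + 1) / 2"
      by (simp add: sum_subtractf field_simps)
    then show ?thesis
      by (simp add: field_simps flip: sum_divide_distrib)
  qed
  moreover have "(\<Sum>k\<in>{1..m}. (real m + 1 - real k) / (real m + 1) - \<epsilon>) \<le> (\<Sum>k\<in>{1..m}. G k)"
    using G_approx by (intro sum_mono) (force simp: abs_le_iff)
  ultimately have lower: "real m * (1/2 - \<epsilon>) \<le> (\<Sum>k\<in>{1..m}. G k)"
    by (simp add: sum_subtractf algebra_simps)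
  have "(\<Sum>j\<in>{1..m}. \<Sum>i=1..n. G (rk i j)) = (\<Sum>i=1..n. \<Sum>j\<in>{1..m}. G (rk i j))"
    by (rule sum.swap)
  also have "\<dots> = (\<Sum>i=1..n. \<Sum>k\<in>{1..m}. G k)"
    by (intro sum.cong refl sum_rank_reindex)
  also have "\<dots> = real n * (\<Sum>k\<in>{1..m}. G k)"
    by simp
  finally show ?thesis
    using mult_left_mono[OF lower, of "real n"] by (simp add: mult.assoc)
qed

lemma borda_winner_positional_welfare_ge:
  assumes b: "b \<in> {1..m}" "\<forall>j\<in>{1..m}. borda n m rk j \<le> borda n m rk b"
    and small: "\<epsilon> \<le> 1/10"
  shows "(1 - 5 * \<epsilon>) * (MAX j\<in>{1..m}. \<Sum>i=1..n. G (rk i j)) \<le> (\<Sum>i=1..n. G (rk i b))"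
proof -
  define W where "W j = (\<Sum>i=1..n. G (rk i j))" for j
  define W_max where "W_max = (MAX j\<in>{1..m}. W j)"
  have "0 \<le> \<epsilon>"
    using G_approx[OF b(1)] by linarith
  have W_le: "W j \<le> W_max" if "j \<in> {1..m}" for j
    unfolding W_max_def using that by (intro Max_ge) auto
  obtain j where j: "j \<in> {1..m}" "W j = W_max"
    using Max_in[of "W ` {1..m}"] b(1) unfolding W_max_def by fastforce
  have "real (borda n m rk j) / (real m + 1) \<le> real (borda n m rk b) / (real m + 1)"
    using b(2) j(1) by (intro divide_right_mono) auto
  then have winner: "W_max - 2 * real n * \<epsilon> \<le> W b"
    using positional_welfare_approx_borda[OF j(1)] positional_welfare_approx_borda[OF b(1)] j(2)
    unfolding W_def by (auto simp: abs_le_iff)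
  have "real n * real m * (1/2 - \<epsilon>) \<le> real m * W_max"
    using sum_positional_welfare_ge sum_bounded_above[of "{1..m}" W W_max] W_le
    unfolding W_def by fastforce
  then have average: "real n * (1/2 - \<epsilon>) \<le> W_max"
    using b(1) by (simp add: mult.commute[of _ "real m"] mult.assoc)
  have "0 \<le> real n * \<epsilon> * (1/2 - 5 * \<epsilon>)"
    using small \<open>0 \<le> \<epsilon>\<close> by simp
  then have "2 * real n * \<epsilon> \<le> 5 * \<epsilon> * (real n * (1/2 - \<epsilon>))"
    by (simp add: algebra_simps)
  also have "\<dots> \<le> 5 * \<epsilon> * W_max"
    using average \<open>0 \<le> \<epsilon>\<close> by (intro mult_left_mono) auto
  finally show ?thesis
    using winner unfolding W_def[symmetric] W_max_def[symmetric] by (simp add: algebra_simps)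
qed

end

end

theorem theorem12:
  fixes P :: "real measure" and \<epsilon> :: real and n m :: nat
    and rk :: "nat \<Rightarrow> nat \<Rightarrow> nat" and b :: nat
  assumes "prob_space P"
    and "sets P = sets borel"
    and "measure P {0..1} = 1"
    and "\<forall>x. measure P {x} = 0"
    and "bij_betw (cdf P) {0..1} {0..1}"
    and "tv_unif P \<le> \<epsilon>" and "\<epsilon> \<le> 1/10"
    and "is_profile n m rk"
    and "b \<in> {1..m}" and "\<forall>j\<in>{1..m}. borda n m rk j \<le> borda n m rk b"
  shows "exp_sw P n m rk b \<ge> (1 - 5 * \<epsilon>) * (MAX j\<in>{1..m}. exp_sw P n m rk j)"
proof -
  interpret real_distribution P
    using assms(1,2) by (simp add: real_distribution_def real_distribution_axioms_def)
  define G where "G k = (LINT t|lborel. indicator {0..1} t * binomial_tail m k (1 - cdf P t))" for k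
  have cdf_close: "\<bar>cdf P t - t\<bar> \<le> \<epsilon>" if "t \<in> {0..1}" for t
    using abs_cdf_minus_le_tv_unif[OF that] assms(6) by linarith
  have G_approx: "\<bar>G k - (real m + 1 - real k) / (real m + 1)\<bar> \<le> \<epsilon>" if "k \<in> {1..m}" for k
    unfolding G_def using integral_binomial_tail_cdf_approx[OF cdf_close] assms(7) that by auto
  have exp_sw_eq: "exp_sw P n m rk j = (\<Sum>i=1..n. G (rk i j))" if "j \<in> {1..m}" for j
    unfolding G_def using exp_sw_eq_sum_integral[OF assms(3,8) that] .
  then have "exp_sw P n m rk ` {1..m} = (\<lambda>j. \<Sum>i=1..n. G (rk i j)) ` {1..m}"
    by (intro image_cong) auto
  then show ?thesis
    using borda_winner_positional_welfare_ge[OF assms(8) G_approx assms(9,10,7)]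
      exp_sw_eq[OF assms(9)] by simp
qed

end
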